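(* Consider any instance of the budgeted matching-market pricing problem (defined in the context) in which every buyer $i$ satisfies $b_i\ge v_i$, and run Algorithm 1 (described in the context). If buyer $i$ obtains her bundle $X_i$ at price per item $\bar p_i$, then every item that the algorithm assigns (to any buyer) at a price $p'<\bar p_i$ is not in $S_i$.
   Context: Instance: a finite set $I$ of $n$ buyers and a finite set $J$ of $m$ distinct items. Each buyer $i$ has a preference set $S_i\subseteq J$, a value $v_i>0$ for each item of $S_i$ (value $0$ for items outside $S_i$), and a budget $b_i\ge 0$. An outcome $\langle\mathbf{X},\mathbf{p}\rangle$ consists of pairwise disjoint bundles $X_i\subseteq J$ and payments $p_i\ge 0$. Algorithm 1 (ascending price auction). Throughout, $b_i$ denotes buyer $i$'s remaining budget (initially her budget, decreased by each payment), $J$ denotes the set of currently unsold items, and $\epsilon>0$ is an arbitrarily small price increment. For a price $p>0$, the demand of buyer $i$ is $D_i(p)=\min\{\lfloor b_i/p\rfloor,|S_i|\}$ if $p\le v_i$ and $D_i(p)=0$ if $p>v_i$. Let $A^p=\{i: v_i>p, D_i(p)>0\}$, $Q^p=\{i: v_i=p, D_i(p)>0\}$, $I^p=A^p\cup Q^p$. $G^p$ is the bipartite graph on $I^p\cup J$ with an edge $(i,j)$ iff $j\in S_i$, and $\bar G^p$ is its subgraph on $A^p\cup J$. A $B$-matching of $G^p$ (or $\bar G^p$) is a set of its edges in which every buyer $i$ lies in at most $D_i(p)$ edges and every item in at most one edge; $\mathcal{M}(G^p)$ denotes a maximum one. Given a $B$-matching $\mathcal{M}$, an augmenting path from buyer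 $i$ to item $j$ is a sequence $i=y_1,z_1,y_2,z_2,\dots,y_h,z_h=j$ of buyers $y_k$ and items $z_k$ with $z_k\in S_{y_k}$, $(y_k,z_k)\notin\mathcal{M}$ for all $k$, and $(z_k,y_{k+1})\in\mathcal{M}$ for $k<h$. "Giving item $j$ to buyer $i$ at price $q$" means: remove $j$ from $J$, add $j$ to $X_i$, increase $p_i$ by $q$ and decrease $b_i$ by $q$. Start with $p=0$, $X_i=\emptyset$, $p_i=0$. While a maximum $B$-matching of $G^p$ is nonempty: increase $p$ until $|\mathcal{M}(G^p)|>|\mathcal{M}(G^{p+\epsilon})|$ (a critical price). If $|\mathcal{M}(G^p)|>|\mathcal{M}(\bar G^p)|$, run Procedure I: let $J_Q=\bigcup_{i\in Q^p}S_i$; compute a maximum $B$-matching $\mathcal{M}$ of $\bar G^p$ that matches the minimum number of items of $J_Q$; let $\bar J$ be the items of $J$ unmatched in $\mathcal{M}$ and $N(\bar J)$ the buyers having an augmenting path w.r.t. $\mathcal{M}$ to some item of $\bar J$; give each item $j$ with $(i,j)\in\mathcal{M}$, $i\in N(\bar J)$, to $i$ at price $p$; and assign the items of $\bar J$ to buyers in $Q^p$ (respecting supply and budget constraints), each at price $p$. Otherwise run Procedure II: compute a maximum $B$-matching $\mathcal{M}$ of $G^{p+\epsilon}$; let $\bar J$ be the items unmatched in it and $N(\bar J)$ the buyers having an augmenting path to an item of $\bar J$; give each item $j$ with $(i,j)\in\mathcal{M}$, $i\in N(\bar J)$, to $i$ at price $p+\epsilon$; remove $\bar J$ from $J$; and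 remove all items no longer demanded by any buyer. *)

theory Defs
  imports Complex_Main "HOL-Library.Product_Lexorder"
begin

text \<open>Prices, budgets and payments live in the ordered group of quantities x + k*eps with
  x real, k an integer and eps a positive infinitesimal ("arbitrarily small" increment).
  The pair (x, k) stands for x + k*eps; the order is the lexicographic one from
  Product_Lexorder, which is exactly the order of x + k*eps for infinitesimal eps > 0.\<close>

type_synonym xreal = "real \<times> int"

definition xscale :: "nat \<Rightarrow> xreal \<Rightarrow> xreal" where
  "xscale n q = (real n * fst q, int n * snd q)"

definition xsub :: "xreal \<Rightarrow> xreal \<Rightarrow> xreal" where
  "xsub a c = (fst a - fst c, snd a - snd c)"

text \<open>Demand D_i(q) = min(floor(b_i/q), |S_i|) if q \<le> v_i and 0 if q > v_i, where b_i is the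
  remaining budget; floor(b_i/q) is written out as the largest n with n*q \<le> b_i.\<close>
definition demand :: "('b \<Rightarrow> 'j set) \<Rightarrow> ('b \<Rightarrow> real) \<Rightarrow> ('b \<Rightarrow> xreal) \<Rightarrow> 'b \<Rightarrow> xreal \<Rightarrow> nat" where
  "demand S v bud i q =
     (if (v i, 0) < q then 0
      else Max {n. n \<le> card (S i) \<and> (n = 0 \<or> xscale n q \<le> bud i)})"

definition active :: "'b set \<Rightarrow> ('b \<Rightarrow> 'j set) \<Rightarrow> ('b \<Rightarrow> real) \<Rightarrow> ('b \<Rightarrow> xreal) \<Rightarrow> xreal \<Rightarrow> 'b set" where
  "active I S v bud q = {i \<in> I. demand S v bud i q > 0}"

definition edges :: "('b \<Rightarrow> 'j set) \<Rightarrow> 'b set \<Rightarrow> 'j set \<Rightarrow> ('b \<times> 'j) set" where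
  "edges S Bs J = {(i, j). i \<in> Bs \<and> j \<in> J \<and> j \<in> S i}"

definition is_bmatching :: "('b \<Rightarrow> 'j set) \<Rightarrow> 'b set \<Rightarrow> ('b \<Rightarrow> nat) \<Rightarrow> 'j set \<Rightarrow> ('b \<times> 'j) set \<Rightarrow> bool" where
  "is_bmatching S Bs cap J M \<longleftrightarrow>
     M \<subseteq> edges S Bs J \<and> (\<forall>i. card {j. (i, j) \<in> M} \<le> cap i) \<and> (\<forall>j. card {i. (i, j) \<in> M} \<le> 1)"

definition is_max_bmatching :: "('b \<Rightarrow> 'j set) \<Rightarrow> 'b set \<Rightarrow> ('b \<Rightarrow> nat) \<Rightarrow> 'j set \<Rightarrow> ('b \<times> 'j) set \<Rightarrow> bool" where
  "is_max_bmatching S Bs cap J M \<longleftrightarrow>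
     is_bmatching S Bs cap J M \<and> (\<forall>M'. is_bmatching S Bs cap J M' \<longrightarrow> card M' \<le> card M)"

definition msize :: "('b \<Rightarrow> 'j set) \<Rightarrow> 'b set \<Rightarrow> ('b \<Rightarrow> nat) \<Rightarrow> 'j set \<Rightarrow> nat" where
  "msize S Bs cap J = Max (card ` {M. is_bmatching S Bs cap J M})"

definition aug_path :: "('b \<Rightarrow> 'j set) \<Rightarrow> 'b set \<Rightarrow> 'j set \<Rightarrow> ('b \<times> 'j) set \<Rightarrow> 'b \<Rightarrow> 'j \<Rightarrow> bool" where
  "aug_path S Bs J M i j \<longleftrightarrow>
     (\<exists>ys zs. ys \<noteq> [] \<and> length zs = length ys \<and> hd ys = i \<and> last zs = j \<and>
        (\<forall>k < length ys. ys ! k \<in> Bs \<and> zs ! k \<in> J \<and> zs ! k \<in> S (ys ! k) \<and> (ys ! k, zs ! k) \<notin> M) \<and>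
        (\<forall>k. Suc k < length ys \<longrightarrow> (ys ! Suc k, zs ! k) \<in> M))"

record ('b, 'j) astate =
  price :: xreal
  unsold :: "'j set"
  budget :: "'b \<Rightarrow> xreal"
  sales :: "('b \<times> 'j \<times> xreal) set"   \<comment> \<open>(buyer, item, price paid for the item)\<close>

definition init_state :: "'j set \<Rightarrow> ('b \<Rightarrow> real) \<Rightarrow> ('b, 'j) astate" where
  "init_state J0 b = \<lparr>price = (0, 0), unsold = J0, budget = (\<lambda>i. (b i, 0)), sales = {}\<rparr>"

definition capa :: "('b \<Rightarrow> 'j set) \<Rightarrow> ('b \<Rightarrow> real) \<Rightarrow> ('b, 'j) astate \<Rightarrow> xreal \<Rightarrow> 'b \<Rightarrow> nat" where
  "capa S v st q = (\<lambda>i. demand S v (budget st) i q)"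

text \<open>A (real) price p reachable by increasing the current price at which
  |M(G^p)| > |M(G^(p+eps))|.\<close>
definition is_critical :: "'b set \<Rightarrow> ('b \<Rightarrow> 'j set) \<Rightarrow> ('b \<Rightarrow> real) \<Rightarrow> ('b, 'j) astate \<Rightarrow> real \<Rightarrow> bool" where
  "is_critical I S v st p \<longleftrightarrow> price st \<le> (p, 0) \<and> p > 0 \<and>
     msize S (active I S v (budget st) (p, 1)) (capa S v st (p, 1)) (unsold st)
       < msize S (active I S v (budget st) (p, 0)) (capa S v st (p, 0)) (unsold st)"

definition next_critical :: "'b set \<Rightarrow> ('b \<Rightarrow> 'j set) \<Rightarrow> ('b \<Rightarrow> real) \<Rightarrow> ('b, 'j) astate \<Rightarrow> real \<Rightarrow> bool" where
  "next_critical I S v st p \<longleftrightarrow> is_critical I S v st p \<and> (\<forall>p'. is_critical I S v st p' \<longrightarrow> p \<le> p')"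

text \<open>One iteration of the while loop of Algorithm 1 (Procedure I or Procedure II).\<close>
inductive alg_step :: "'b set \<Rightarrow> ('b \<Rightarrow> 'j set) \<Rightarrow> ('b \<Rightarrow> real) \<Rightarrow> ('b, 'j) astate \<Rightarrow> ('b, 'j) astate \<Rightarrow> bool"
  for I S v where
  proc1:
  "\<lbrakk> next_critical I S v st p; q = (p, 0);
     Ip = active I S v (budget st) q;
     A = {i \<in> Ip. v i > p}; Q = {i \<in> Ip. v i = p};
     msize S A (capa S v st q) (unsold st) < msize S Ip (capa S v st q) (unsold st);
     JQ = \<Union> (S ` Q);
     is_max_bmatching S A (capa S v st q) (unsold st) M;
     \<forall>M'. is_max_bmatching S A (capa S v st q) (unsold st) M' \<longrightarrow>
          card (snd ` M \<inter> JQ) \<le> card (snd ` M' \<inter> JQ);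
     Jbar = unsold st - snd ` M;
     N = {i \<in> A. \<exists>j \<in> Jbar. aug_path S A (unsold st) M i j};
     M1 = {(i, j) \<in> M. i \<in> N};
     bud1 = (\<lambda>i. xsub (budget st i) (xscale (card {j. (i, j) \<in> M1}) q));
     is_max_bmatching S Q (\<lambda>i. demand S v bud1 i q) Jbar MQ;
     st' = \<lparr>price = q, unsold = unsold st - snd ` M1 - snd ` MQ,
            budget = (\<lambda>i. xsub (bud1 i) (xscale (card {j. (i, j) \<in> MQ}) q)),
            sales = sales st \<union> {(i, j, q) | i j. (i, j) \<in> M1 \<union> MQ}\<rparr> \<rbrakk>
   \<Longrightarrow> alg_step I S v st st'"
| proc2:
  "\<lbrakk> next_critical I S v st p; q0 = (p, 0); q = (p, 1);
     Ip0 = active I S v (budget st) q0;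
     \<not> msize S {i \<in> Ip0. v i > p} (capa S v st q0) (unsold st) < msize S Ip0 (capa S v st q0) (unsold st);
     Ip = active I S v (budget st) q;
     is_max_bmatching S Ip (capa S v st q) (unsold st) M;
     Jbar = unsold st - snd ` M;
     N = {i \<in> Ip. \<exists>j \<in> Jbar. aug_path S Ip (unsold st) M i j};
     M1 = {(i, j) \<in> M. i \<in> N};
     bud1 = (\<lambda>i. xsub (budget st i) (xscale (card {j. (i, j) \<in> M1}) q));
     J1 = unsold st - snd ` M1 - Jbar;
     st' = \<lparr>price = q, unsold = {j \<in> J1. \<exists>i \<in> I. j \<in> S i \<and> demand S v bud1 i q > 0},
            budget = bud1,
            sales = sales st \<union> {(i, j, q) | i j. (i, j) \<in> M1}\<rparr> \<rbrakk>
   \<Longrightarrow> alg_step I S v st st'"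

definition final_run :: "'b set \<Rightarrow> 'j set \<Rightarrow> ('b \<Rightarrow> 'j set) \<Rightarrow> ('b \<Rightarrow> real) \<Rightarrow> ('b \<Rightarrow> real) \<Rightarrow> ('b, 'j) astate \<Rightarrow> bool" where
  "final_run I J0 S v b st \<longleftrightarrow>
     (alg_step I S v)\<^sup>*\<^sup>* (init_state J0 b) st \<and> \<not> (\<exists>p. is_critical I S v st p)"

end

theory Submission
  imports Defs
begin

(* Buyer i pays pbar <= v_i for her items, so it suffices that along every run the following holds:
   whenever an item of S_i is sold at a price q < v_i, buyer i already holds an item bought at a price
   at most q. Consider a step selling such an item at price q. If i has bought before, she paid at
   most the current price. Otherwise her budget is still b_i >= v_i > q, so she has positive demand
   at q and is a buyer of the maximum B-matching M of that step. The item was sold because it is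
   unmatched in M or matched to a buyer with an augmenting path to an unmatched item; either way i
   has such a path too. Maximality of M then forces i to be saturated, hence matched, and she is
   served in this step at price q. *)

lemma finite_bmatching:
  "is_bmatching S Bs cap J M \<Longrightarrow> finite Bs \<Longrightarrow> finite J \<Longrightarrow> finite M"
  unfolding is_bmatching_def edges_def by (rule finite_subset[of _ "Bs \<times> J"]) auto

lemma finite_relation_sections:
  assumes "finite M"
  shows "finite {j. (x, j) \<in> M}" "finite {x. (x, j) \<in> M}"
  using finite_subset[of "{j. (x, j) \<in> M}" "snd ` M"] finite_subset[of "{x. (x, j) \<in> M}" "fst ` M"]
    assms by force+

lemma bmatching_item_unique:
  assumes "is_bmatching S Bs cap J M" "finite M" "(x, j) \<in> M" "(y, j) \<in> M"
  shows "x = y"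
  using assms(1,3,4) card_le_Suc0_iff_eq[OF finite_relation_sections(2)[OF assms(2)], of j]
  by (auto simp: is_bmatching_def)

lemma bmatching_subset:
  assumes "is_bmatching S Bs cap J M" "finite M" "M' \<subseteq> M"
  shows "is_bmatching S Bs cap J M'"
  unfolding is_bmatching_def
proof (intro conjI allI)
  show "M' \<subseteq> edges S Bs J" using assms(1,3) by (auto simp: is_bmatching_def)
  fix x j
  have "card {j. (x, j) \<in> M'} \<le> card {j. (x, j) \<in> M}"
    using assms(3) by (intro card_mono) (auto simp: finite_relation_sections assms(2))
  then show "card {j. (x, j) \<in> M'} \<le> cap x"
    using assms(1) unfolding is_bmatching_def by (meson order.trans)
  have "card {x. (x, j) \<in> M'} \<le> card {x. (x, j) \<in> M}"
    using assms(3) by (intro card_mono) (auto simp: finite_relation_sections assms(2))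
  then show "card {x. (x, j) \<in> M'} \<le> 1"
    using assms(1) unfolding is_bmatching_def by (meson order.trans)
qed

lemma bmatching_insert:
  assumes "is_bmatching S Bs cap J M" "finite M" "(x, z) \<in> edges S Bs J" "z \<notin> snd ` M"
    "card {j. (x, j) \<in> M} < cap x"
  shows "is_bmatching S Bs cap J (insert (x, z) M)"
  unfolding is_bmatching_def
proof (intro conjI allI)
  show "insert (x, z) M \<subseteq> edges S Bs J" using assms(1,3) by (auto simp: is_bmatching_def)
  fix w j
  show "card {j. (w, j) \<in> insert (x, z) M} \<le> cap w"
  proof (cases "w = x")
    case True
    then have "{j. (w, j) \<in> insert (x, z) M} = insert z {j. (x, j) \<in> M}" by auto
    then show ?thesis
      using True assms(5) finite_relation_sections(1)[OF assms(2)] by (simp add: card_insert_if)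
  next
    case False
    then show ?thesis using assms(1) by (simp add: is_bmatching_def)
  qed
  show "card {w. (w, j) \<in> insert (x, z) M} \<le> 1"
  proof (cases "j = z")
    case True
    then have "{w. (w, j) \<in> insert (x, z) M} = {x}" using assms(4) by force
    then show ?thesis by simp
  next
    case False
    then show ?thesis using assms(1) by (simp add: is_bmatching_def)
  qed
qed

lemma bmatching_swap:
  assumes "is_bmatching S Bs cap J M" "finite M" "(y, z) \<in> M" "(x, z) \<in> edges S Bs J"
    "(x, z) \<notin> M" "card {j. (x, j) \<in> M} < cap x"
  defines "M' \<equiv> insert (x, z) (M - {(y, z)})"
  shows "is_bmatching S Bs cap J M'" "card M' = card M" "card {j. (y, j) \<in> M'} < cap y"
proof -
  have "x \<noteq> y" using assms(3,5) by auto
  show "card M' = card M"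
    using card_Suc_Diff1[OF assms(2,3)] assms(2,5) by (simp add: M'_def)
  have "z \<notin> snd ` (M - {(y, z)})"
    using bmatching_item_unique[OF assms(1,2) _ assms(3)] by force
  moreover have "{j. (x, j) \<in> M - {(y, z)}} = {j. (x, j) \<in> M}" using \<open>x \<noteq> y\<close> by auto
  ultimately show "is_bmatching S Bs cap J M'"
    using bmatching_insert[OF bmatching_subset[OF assms(1,2) Diff_subset] _ assms(4)] assms(2,6)
    by (simp add: M'_def)
  have "{j. (y, j) \<in> M'} = {j. (y, j) \<in> M} - {z}" using \<open>x \<noteq> y\<close> by (auto simp: M'_def)
  moreover have "card {j. (y, j) \<in> M} \<le> cap y" using assms(1) by (simp add: is_bmatching_def)
  ultimately show "card {j. (y, j) \<in> M'} < cap y"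
    using assms(3) finite_relation_sections(1)[OF assms(2)] card_Diff1_less[of _ z]
    by (metis (mono_tags) mem_Collect_eq order_less_le_trans)
qed

definition alternating_walk ::
    "('b \<Rightarrow> 'j set) \<Rightarrow> 'b set \<Rightarrow> 'j set \<Rightarrow> ('b \<times> 'j) set \<Rightarrow> 'b list \<Rightarrow> 'j list \<Rightarrow> bool" where
  "alternating_walk S Bs J M ys zs \<longleftrightarrow> ys \<noteq> [] \<and> length zs = length ys \<and>
     (\<forall>k < length ys. ys ! k \<in> Bs \<and> zs ! k \<in> J \<and> zs ! k \<in> S (ys ! k) \<and> (ys ! k, zs ! k) \<notin> M) \<and>
     (\<forall>k. Suc k < length ys \<longrightarrow> (ys ! Suc k, zs ! k) \<in> M)"

lemma aug_path_iff_alternating_walk: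
  "aug_path S Bs J M i j \<longleftrightarrow>
     (\<exists>ys zs. alternating_walk S Bs J M ys zs \<and> hd ys = i \<and> last zs = j)"
  unfolding aug_path_def alternating_walk_def by blast

lemma alternating_walk_Cons:
  "alternating_walk S Bs J M (y # ys) (z # zs) \<longleftrightarrow>
     y \<in> Bs \<and> z \<in> J \<and> z \<in> S y \<and> (y, z) \<notin> M \<and>
     (ys = [] \<and> zs = [] \<or> alternating_walk S Bs J M ys zs \<and> (hd ys, z) \<in> M)"
  by (cases ys; cases zs) (auto simp: alternating_walk_def All_less_Suc2)

lemma alternating_walk_drop:
  assumes "alternating_walk S Bs J M ys zs" "k < length ys"
  shows "alternating_walk S Bs J M (drop k ys) (drop k zs)"
  using assms by (auto simp: alternating_walk_def)

lemma alternating_walk_cong: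
  assumes "alternating_walk S Bs J M ys zs"
    and "\<And>x z. z \<in> set zs \<Longrightarrow> (x, z) \<in> M' \<longleftrightarrow> (x, z) \<in> M"
  shows "alternating_walk S Bs J M' ys zs"
  using assms unfolding alternating_walk_def by (metis Suc_lessD nth_mem)

lemma alternating_walk_augments:
  assumes "alternating_walk S Bs J M ys zs" "is_bmatching S Bs cap J M" "finite M"
    "last zs \<notin> snd ` M" "card {j. (hd ys, j) \<in> M} < cap (hd ys)"
  shows "\<exists>M'. is_bmatching S Bs cap J M' \<and> card M' = Suc (card M)"
  using assms
  \<comment> \<open>If the first item recurs later in the walk, shortcut to that occurrence; otherwise move the
    first item to the first buyer, which passes the spare capacity on to the next buyer.\<close>
proof (induction "length ys" arbitrary: ys zs M rule: less_induct)
  case less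
  obtain y ys' z zs' where ys: "ys = y # ys'" and zs: "zs = z # zs'"
    using less.prems(1) by (cases ys; cases zs) (auto simp: alternating_walk_def)
  have head: "y \<in> Bs" "z \<in> J" "z \<in> S y" "(y, z) \<notin> M"
    and tail: "ys' = [] \<and> zs' = [] \<or> alternating_walk S Bs J M ys' zs' \<and> (hd ys', z) \<in> M"
    using less.prems(1) by (simp_all add: ys zs alternating_walk_Cons)
  have edge: "(y, z) \<in> edges S Bs J" using head by (simp add: edges_def)
  consider (single) "ys' = []" "zs' = []"
    | (shortcut) "alternating_walk S Bs J M ys' zs'" "z \<in> set zs'"
    | (flip) "alternating_walk S Bs J M ys' zs'" "(hd ys', z) \<in> M" "z \<notin> set zs'"
    using tail by blast
  then show ?case
  proof cases
    case single
    have "is_bmatching S Bs cap J (insert (y, z) M)"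
      using bmatching_insert[OF less.prems(2,3) edge] less.prems(4,5) single by (simp add: ys zs)
    moreover have "card (insert (y, z) M) = Suc (card M)" using head(4) less.prems(3) by simp
    ultimately show ?thesis by blast
  next
    case shortcut
    then obtain k where k: "k < length zs'" "zs' ! k = z" by (meson in_set_conv_nth)
    have "length zs' = length ys'" using shortcut(1) by (simp add: alternating_walk_def)
    then have drop_k: "drop k ys' = ys' ! k # drop (Suc k) ys'" "drop k zs' = z # drop (Suc k) zs'"
      using k Cons_nth_drop_Suc[of k ys'] Cons_nth_drop_Suc[of k zs'] by simp_all
    have "alternating_walk S Bs J M (drop k ys') (drop k zs')"
      using alternating_walk_drop[OF shortcut(1)] k(1) \<open>length zs' = length ys'\<close> by simp
    then have "alternating_walk S Bs J M (y # drop (Suc k) ys') (z # drop (Suc k) zs')"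
      using head by (simp add: drop_k alternating_walk_Cons)
    moreover have "length (y # drop (Suc k) ys') < length ys"
      using k \<open>length zs' = length ys'\<close> by (simp add: ys)
    moreover have "last (z # drop (Suc k) zs') = last zs"
      using last_drop[of k zs'] k(1) by (auto simp: drop_k zs)
    ultimately show ?thesis using less by (metis list.sel(1) ys)
  next
    case flip
    define M0 where "M0 = insert (y, z) (M - {(hd ys', z)})"
    have "is_bmatching S Bs cap J M0" "card M0 = card M"
      "card {j. (hd ys', j) \<in> M0} < cap (hd ys')"
      using bmatching_swap[OF less.prems(2,3) flip(2) edge head(4)] less.prems(5)
      by (simp_all add: M0_def ys)
    moreover have "alternating_walk S Bs J M0 ys' zs'"
      by (rule alternating_walk_cong[OF flip(1)]) (use flip(3) in \<open>auto simp: M0_def\<close>)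
    moreover have "last zs' \<notin> snd ` M0"
    proof -
      have "zs' \<noteq> []" using flip(1) by (auto simp: alternating_walk_def)
      then have "last zs' \<noteq> z" "last zs' = last zs"
        using last_in_set[of zs'] flip(3) by (auto simp: zs)
      then have "last zs' \<notin> insert z (snd ` M)" using less.prems(4) by simp
      moreover have "snd ` M0 \<subseteq> insert z (snd ` M)" by (auto simp: M0_def)
      ultimately show ?thesis by blast
    qed
    moreover have "finite M0" using less.prems(3) by (simp add: M0_def)
    ultimately show ?thesis using less(1)[of ys' M0 zs'] by (simp add: ys)
  qed
qed

lemma max_bmatching_aug_path_source_saturated:
  assumes "is_max_bmatching S Bs cap J M" "finite Bs" "finite J"
    "aug_path S Bs J M x jb" "jb \<notin> snd ` M"
  shows "cap x \<le> card {j. (x, j) \<in> M}"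
proof (rule ccontr)
  assume "\<not> cap x \<le> card {j. (x, j) \<in> M}"
  then have spare: "card {j. (x, j) \<in> M} < cap x" by simp
  obtain ys zs where walk: "alternating_walk S Bs J M ys zs" "hd ys = x" "last zs = jb"
    using assms(4) by (auto simp: aug_path_iff_alternating_walk)
  have M: "is_bmatching S Bs cap J M" using assms(1) by (simp add: is_max_bmatching_def)
  obtain M' where "is_bmatching S Bs cap J M'" "card M' = Suc (card M)"
    using alternating_walk_augments[OF walk(1) M finite_bmatching[OF M assms(2,3)]]
      walk(2,3) assms(5) spare by auto
  then show False using assms(1) by (fastforce simp: is_max_bmatching_def)
qed

lemma aug_path_single:
  "x \<in> Bs \<Longrightarrow> z \<in> J \<Longrightarrow> z \<in> S x \<Longrightarrow> (x, z) \<notin> M \<Longrightarrow> aug_path S Bs J M x z"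
  unfolding aug_path_iff_alternating_walk
  by (rule exI[of _ "[x]"], rule exI[of _ "[z]"]) (simp add: alternating_walk_Cons)

lemma aug_path_Cons:
  assumes "aug_path S Bs J M y jb" "(y, z) \<in> M"
    "x \<in> Bs" "z \<in> J" "z \<in> S x" "(x, z) \<notin> M"
  shows "aug_path S Bs J M x jb"
proof -
  obtain ys zs where "alternating_walk S Bs J M ys zs" "hd ys = y" "last zs = jb"
    using assms(1) by (auto simp: aug_path_iff_alternating_walk)
  moreover from this have "zs \<noteq> []" by (auto simp: alternating_walk_def)
  ultimately show ?thesis
    using assms(2-6) unfolding aug_path_iff_alternating_walk
    by (intro exI[of _ "x # ys"] exI[of _ "z # zs"]) (simp add: alternating_walk_Cons)
qed

lemma max_bmatching_matches_interested_buyer: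
  assumes M: "is_max_bmatching S Bs cap J M" and fin: "finite Bs" "finite J"
    and x: "x \<in> Bs" "0 < cap x" "j \<in> S x"
    and j: "j \<in> J - snd ` M \<or> (\<exists>y. (y, j) \<in> M \<and> (\<exists>jb \<in> J - snd ` M. aug_path S Bs J M y jb))"
  shows "(\<exists>j0. (x, j0) \<in> M) \<and> (\<exists>jb \<in> J - snd ` M. aug_path S Bs J M x jb)"
proof -
  have bm: "is_bmatching S Bs cap J M" using M by (simp add: is_max_bmatching_def)
  then have "finite M" using fin by (rule finite_bmatching)
  have reach: "\<exists>jb \<in> J - snd ` M. aug_path S Bs J M x jb"
    using j
  proof
    assume "j \<in> J - snd ` M"
    then show ?thesis using aug_path_single[of x Bs j J S M] x by (force intro: rev_image_eqI)
  next
    assume "\<exists>y. (y, j) \<in> M \<and> (\<exists>jb \<in> J - snd ` M. aug_path S Bs J M y jb)"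
    then obtain y jb where y: "(y, j) \<in> M" "jb \<in> J - snd ` M" "aug_path S Bs J M y jb" by blast
    have "j \<in> J" using y(1) bm by (auto simp: is_bmatching_def edges_def)
    show ?thesis
    proof (cases "(x, j) \<in> M")
      case True
      then have "x = y" using bmatching_item_unique[OF bm \<open>finite M\<close> _ y(1)] by blast
      then show ?thesis using y by blast
    next
      case False
      then show ?thesis using aug_path_Cons[OF y(3,1) x(1) \<open>j \<in> J\<close> x(3)] y(2) by blast
    qed
  qed
  then have "0 < card {j. (x, j) \<in> M}"
    using max_bmatching_aug_path_source_saturated[OF M fin] x(2)
    by (meson DiffD2 order.strict_trans2)
  then show ?thesis using reach card_gt_0_iff by fastforce
qed

lemma demand_pos_imp_le_value:
  "0 < demand S v bud x q \<Longrightarrow> q \<le> (v x, 0)"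
  by (auto simp: demand_def split: if_splits)

lemma demand_posI:
  assumes "finite (S x)" "S x \<noteq> {}" "q \<le> (v x, 0)" "q \<le> bud x"
  shows "0 < demand S v bud x q"
proof -
  let ?K = "{n. n \<le> card (S x) \<and> (n = 0 \<or> xscale n q \<le> bud x)}"
  have "finite ?K" by (rule finite_subset[of _ "{..card (S x)}"]) auto
  moreover have "1 \<in> ?K"
    using assms by (simp add: xscale_def Suc_le_eq card_gt_0_iff)
  ultimately have "1 \<le> Max ?K" by (rule Max_ge)
  then show ?thesis using assms(3) by (simp add: demand_def not_less)
qed

lemma alg_step_mono:
  assumes "alg_step I S v st st'"
  shows "price st \<le> price st'" "sales st \<subseteq> sales st'" "unsold st' \<subseteq> unsold st"
  using assms
  by (cases rule: alg_step.cases;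
      auto simp: next_critical_def is_critical_def less_eq_prod_def)+

lemma alg_step_new_sale:
  assumes "alg_step I S v st st'" "(x, j, q) \<in> sales st' - sales st"
  shows "q = price st' \<and> x \<in> active I S v (budget st) q"
  using assms(1)
proof (cases rule: alg_step.cases)
  case (proc1 p q' Ip A Q JQ M Jbar N M1 bud1 MQ)
  have "(x, j) \<in> M1 \<union> MQ" "q = q'" using assms(2) proc1(15) by auto
  moreover have "M1 \<subseteq> edges S A (unsold st)" "MQ \<subseteq> edges S Q Jbar"
    using proc1(8,12,14) by (auto simp: is_max_bmatching_def is_bmatching_def)
  ultimately show ?thesis using proc1(3-5,15) by (auto simp: edges_def)
next
  case (proc2 p q0 q' Ip0 Ip M Jbar N M1 bud1 J1)
  have "(x, j) \<in> M1" "q = q'" using assms(2) proc2(13) by auto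
  moreover have "M1 \<subseteq> edges S Ip (unsold st)"
    using proc2(7,10) by (auto simp: is_max_bmatching_def is_bmatching_def)
  ultimately show ?thesis using proc2(6,13) by (auto simp: edges_def)
qed

lemma alg_step_budget_of_nonbuyer:
  assumes "alg_step I S v st st'" "\<forall>j q. (x, j, q) \<notin> sales st'"
  shows "budget st' x = budget st x"
  using assms
proof (cases rule: alg_step.cases)
  case (proc1 p q Ip A Q JQ M Jbar N M1 bud1 MQ)
  have "\<forall>j. (x, j) \<notin> M1 \<union> MQ" using assms(2)[rule_format, of _ q] proc1(15) by auto
  then show ?thesis using proc1(13,15) by (simp add: xsub_def xscale_def)
next
  case (proc2 p q0 q Ip0 Ip M Jbar N M1 bud1 J1)
  have "\<forall>j. (x, j) \<notin> M1" using assms(2)[rule_format, of _ q] proc2(13) by auto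
  then show ?thesis using proc2(11,13) by (simp add: xsub_def xscale_def)
qed

lemma alg_step_sells_to_demanding_buyer:
  assumes step: "alg_step I S v st st'" and fin: "finite I" "finite (unsold st)"
    and sold: "(x, j, q) \<in> sales st' - sales st" "j \<in> S i"
    and i: "i \<in> I" "0 < demand S v (budget st) i q" "q < (v i, 0)"
  shows "\<exists>j0. (i, j0, q) \<in> sales st'"
  using step
proof (cases rule: alg_step.cases)
  case (proc1 p q' Ip A Q JQ M Jbar N M1 bud1 MQ)
  have "q = q'" using alg_step_new_sale[OF step sold(1)] proc1(15) by simp
  have "i \<in> A" using i proc1(2-4) \<open>q = q'\<close> by (simp add: active_def less_prod_def)
  have "finite A" using fin(1) proc1(3,4) by (auto simp: active_def)
  have "(x, j) \<in> M1 \<union> MQ" using sold(1) proc1(15) \<open>q = q'\<close> by auto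
  then have "j \<in> unsold st - snd ` M \<or>
      (\<exists>y. (y, j) \<in> M \<and> (\<exists>jb \<in> unsold st - snd ` M. aug_path S A (unsold st) M y jb))"
    using proc1(10-12,14) by (auto simp: is_max_bmatching_def is_bmatching_def edges_def)
  then obtain j0 where "(i, j0) \<in> M" "\<exists>jb \<in> unsold st - snd ` M. aug_path S A (unsold st) M i jb"
    using max_bmatching_matches_interested_buyer[OF proc1(8) \<open>finite A\<close> fin(2) \<open>i \<in> A\<close> _ sold(2)]
      i(2) \<open>q = q'\<close> by (auto simp: capa_def)
  then have "(i, j0) \<in> M1" using proc1(10-12) \<open>i \<in> A\<close> by auto
  then show ?thesis using proc1(15) \<open>q = q'\<close> by auto
next
  case (proc2 p q0 q' Ip0 Ip M Jbar N M1 bud1 J1)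
  have "q = q'" using alg_step_new_sale[OF step sold(1)] proc2(13) by simp
  have "i \<in> Ip" using i proc2(6) \<open>q = q'\<close> by (simp add: active_def)
  have "finite Ip" using fin(1) proc2(6) by (auto simp: active_def)
  have "(x, j) \<in> M1" using sold(1) proc2(13) \<open>q = q'\<close> by auto
  then have "\<exists>y. (y, j) \<in> M \<and> (\<exists>jb \<in> unsold st - snd ` M. aug_path S Ip (unsold st) M y jb)"
    using proc2(8-10) by auto
  then obtain j0 where "(i, j0) \<in> M" "\<exists>jb \<in> unsold st - snd ` M. aug_path S Ip (unsold st) M i jb"
    using max_bmatching_matches_interested_buyer[OF proc2(7) \<open>finite Ip\<close> fin(2) \<open>i \<in> Ip\<close> _ sold(2)]
      i(2) \<open>q = q'\<close> by (auto simp: capa_def)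
  then have "(i, j0) \<in> M1" using proc2(8-10) \<open>i \<in> Ip\<close> by auto
  then show ?thesis using proc2(13) \<open>q = q'\<close> by auto
qed

lemma run_unsold_subset:
  assumes "(alg_step I S v)\<^sup>*\<^sup>* (init_state J0 b) st"
  shows "unsold st \<subseteq> J0"
  using assms by induction (auto simp: init_state_def dest: alg_step_mono(3))

lemma run_sale_price_bounds:
  assumes "(alg_step I S v)\<^sup>*\<^sup>* (init_state J0 b) st" "(x, j, q) \<in> sales st"
  shows "q \<le> price st \<and> q \<le> (v x, 0)"
  using assms
proof (induction arbitrary: x j q rule: rtranclp_induct)
  case base
  then show ?case by (simp add: init_state_def)
next
  case (step st st')
  show ?case
  proof (cases "(x, j, q) \<in> sales st")
    case True
    then show ?thesis using step.IH alg_step_mono(1)[OF step.hyps(2)] by (meson order.trans)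
  next
    case False
    then have "q = price st'" "x \<in> active I S v (budget st) q"
      using alg_step_new_sale[OF step.hyps(2), of x j q] step.prems by blast+
    then show ?thesis by (auto simp: active_def intro: demand_pos_imp_le_value)
  qed
qed

lemma run_budget_of_nonbuyer:
  assumes "(alg_step I S v)\<^sup>*\<^sup>* (init_state J0 b) st" "\<forall>j q. (x, j, q) \<notin> sales st"
  shows "budget st x = (b x, 0)"
  using assms
proof (induction rule: rtranclp_induct)
  case base
  then show ?case by (simp add: init_state_def)
next
  case (step st st')
  then have "\<forall>j q. (x, j, q) \<notin> sales st" using alg_step_mono(2)[OF step.hyps(2)] by blast
  then show ?case using step.IH alg_step_budget_of_nonbuyer[OF step.hyps(2) step.prems] by simp
qed

lemma run_wanted_item_sold_imp_buyer_served:
  assumes "(alg_step I S v)\<^sup>*\<^sup>* (init_state J0 b) st" "finite I" "finite J0"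
    and i: "i \<in> I" "S i \<subseteq> J0" "v i \<le> b i"
    and "(x, j, q) \<in> sales st" "j \<in> S i" "q < (v i, 0)"
  shows "\<exists>j' q'. (i, j', q') \<in> sales st \<and> q' \<le> q"
  using assms(1,7-)
proof (induction arbitrary: x j q rule: rtranclp_induct)
  case base
  then show ?case by (simp add: init_state_def)
next
  case (step st st')
  note mono = alg_step_mono[OF step.hyps(2)]
  show ?case
  proof (cases "(x, j, q) \<in> sales st")
    case True
    then show ?thesis using step.IH step.prems(2,3) mono(2) by blast
  next
    case new: False
    then have "q = price st'" using alg_step_new_sale[OF step.hyps(2)] step.prems(1) by blast
    show ?thesis
    proof (cases "\<exists>j' q'. (i, j', q') \<in> sales st")
      case True
      then obtain j' q' where "(i, j', q') \<in> sales st" by blast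
      moreover from this have "q' \<le> q"
        using run_sale_price_bounds[OF step.hyps(1)] mono(1) \<open>q = price st'\<close> by (meson order.trans)
      ultimately show ?thesis using mono(2) by blast
    next
      case False
      then have "budget st i = (b i, 0)" using run_budget_of_nonbuyer[OF step.hyps(1)] by blast
      moreover have "q \<le> (b i, 0)"
        using step.prems(3) i(3) by (auto simp: less_prod_def less_eq_prod_def)
      moreover have "finite (S i)" using i(2) \<open>finite J0\<close> by (rule finite_subset)
      ultimately have "0 < demand S v (budget st) i q"
        using demand_posI[of S i q v "budget st"] step.prems(2,3) by (auto dest: less_imp_le)
      moreover have "finite (unsold st)"
        using run_unsold_subset[OF step.hyps(1)] \<open>finite J0\<close> by (rule finite_subset)
      ultimately show ?thesis
        using alg_step_sells_to_demanding_buyer[OF step.hyps(2) \<open>finite I\<close> _ _ step.prems(2) i(1)]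
          step.prems(1,3) new by blast
    qed
  qed
qed

theorem lemma6:
  fixes I :: "'b set" and J0 :: "'j set" and S :: "'b \<Rightarrow> 'j set"
    and v b :: "'b \<Rightarrow> real" and st :: "('b, 'j) astate"
    and i :: 'b and pbar :: xreal
  assumes "finite I" and "finite J0"
    and "\<forall>i \<in> I. S i \<subseteq> J0"
    and "\<forall>i \<in> I. v i > 0" and "\<forall>i \<in> I. b i \<ge> 0"
    and "\<forall>i \<in> I. b i \<ge> v i"
    and "final_run I J0 S v b st"
    and "i \<in> I"
    and "\<exists>j q. (i, j, q) \<in> sales st"
    and "\<forall>j q. (i, j, q) \<in> sales st \<longrightarrow> q = pbar"
  shows "\<forall>i' j' q'. (i', j', q') \<in> sales st \<and> q' < pbar \<longrightarrow> j' \<notin> S i"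
proof (intro allI impI notI)
  fix i' j' q'
  assume sold: "(i', j', q') \<in> sales st \<and> q' < pbar" and "j' \<in> S i"
  have run: "(alg_step I S v)\<^sup>*\<^sup>* (init_state J0 b) st"
    using assms(7) by (simp add: final_run_def)
  have "pbar \<le> (v i, 0)"
    using assms(9,10) run_sale_price_bounds[OF run] by blast
  then obtain j q where "(i, j, q) \<in> sales st" "q \<le> q'"
    using run_wanted_item_sold_imp_buyer_served[OF run assms(1,2,8)] assms(3,6,8) sold \<open>j' \<in> S i\<close>
    by (meson less_le_trans)
  moreover from this have "q = pbar" using assms(10) by blast
  ultimately show False using sold by (metis leD)
qed

end
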